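(* Let $\varepsilon>0$ and $\zeta\in(0,1/2]$. There exists an $\varepsilon$-DP (event-level) continual mechanism for the data structure version of incremental monotone symmetric norm estimation on $n$ elements and streams of length $T$ with multiplicative error $1+\zeta$ and additive error $\tilde O\big(\frac{\log^6(nT)}{\varepsilon^2\zeta^5}\big)\cdot L(e_1)$: with probability at least $2/3$, simultaneously for all time steps $t$ and all monotone symmetric norms $L$ on $\mathbb R^n$, the answer $\mathfrak d^t(L)$ satisfies $(1+\zeta)^{-1}L(f^t)-\alpha L(e_1)\le\mathfrak d^t(L)\le(1+\zeta)L(f^t)+\alpha L(e_1)$ with $\alpha=\tilde O(\log^6(nT)/(\varepsilon^2\zeta^5))$.
   Context: Incremental streams over universe $[n]\cup\{\bot\}$: each update inserts one element of $[n]$ or is the empty element $\bot$; $f^t\in\mathbb N^n$ is the frequency vector after $t$ updates. A norm $L$ on $\mathbb R^n$ is monotone if $|f_i|\le|f'_i|$ for all $i$ implies $L(f)\le L(f')$, and symmetric if $L$ is invariant under permuting coordinates; $e_1=(1,0,\dots,0)$. Data structure version of monotone symmetric norm estimation: at each time $t$ the mechanism maintains a data structure $\mathfrak d^t$ which, queried with any monotone symmetric norm $L$, returns an estimate $\mathfrak d^t(L)$ of $L(f^t)$. Privacy is with respect to the entire released data structures (all possible query answers) over all time steps. Two streams are event-level neighboring if they differ in at most one time step; $\varepsilon$-DP means $\Pr[\mathcal A(u)\in S]\le e^\varepsilon\Pr[\mathcal A(v)\in S]$ for all neighbors and output sets $S$. $\tilde O$ hides lower-order polylogarithmic factors (e.g.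 in $\log(nT)$, $1/\varepsilon$, $1/\zeta$). *)

theory Defs
  imports "HOL-Probability.Probability"
begin

text \<open>Vectors of R^n are represented as functions nat => real vanishing outside {0..<n};
  coordinate i (0-based) corresponds to universe element i+1 of [n].\<close>
definition rvec :: "nat \<Rightarrow> (nat \<Rightarrow> real) set" where
  "rvec n = {v. \<forall>i\<ge>n. v i = 0}"

definition is_norm_on :: "nat \<Rightarrow> ((nat \<Rightarrow> real) \<Rightarrow> real) \<Rightarrow> bool" where
  "is_norm_on n L \<longleftrightarrow>
     (\<forall>v\<in>rvec n. L v = 0 \<longleftrightarrow> v = (\<lambda>_. 0)) \<and>
     (\<forall>v\<in>rvec n. \<forall>c::real. L (\<lambda>i. c * v i) = \<bar>c\<bar> * L v) \<and>
     (\<forall>v\<in>rvec n. \<forall>w\<in>rvec n. L (\<lambda>i. v i + w i) \<le> L v + L w)"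

definition monotone_norm_on :: "nat \<Rightarrow> ((nat \<Rightarrow> real) \<Rightarrow> real) \<Rightarrow> bool" where
  "monotone_norm_on n L \<longleftrightarrow>
     (\<forall>v\<in>rvec n. \<forall>w\<in>rvec n. (\<forall>i<n. \<bar>v i\<bar> \<le> \<bar>w i\<bar>) \<longrightarrow> L v \<le> L w)"

definition symmetric_norm_on :: "nat \<Rightarrow> ((nat \<Rightarrow> real) \<Rightarrow> real) \<Rightarrow> bool" where
  "symmetric_norm_on n L \<longleftrightarrow>
     (\<forall>v\<in>rvec n. \<forall>\<sigma>. \<sigma> permutes {..<n} \<longrightarrow> L (v \<circ> \<sigma>) = L v)"

definition mon_sym_norm :: "nat \<Rightarrow> ((nat \<Rightarrow> real) \<Rightarrow> real) \<Rightarrow> bool" where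
  "mon_sym_norm n L \<longleftrightarrow> is_norm_on n L \<and> monotone_norm_on n L \<and> symmetric_norm_on n L"

definition e1 :: "nat \<Rightarrow> real" where
  "e1 = (\<lambda>i. if i = 0 then 1 else 0)"

text \<open>Streams: lists of updates; Some i inserts element i (i < n), None is the empty element.\<close>
definition valid_stream :: "nat \<Rightarrow> nat \<Rightarrow> nat option list \<Rightarrow> bool" where
  "valid_stream n T xs \<longleftrightarrow> length xs = T \<and> (\<forall>x\<in>set xs. x = None \<or> (\<exists>i<n. x = Some i))"

definition freq :: "nat option list \<Rightarrow> nat \<Rightarrow> nat \<Rightarrow> real" where
  "freq xs t i = real (card {j. j < t \<and> j < length xs \<and> xs ! j = Some i})"

definition neighboring :: "nat option list \<Rightarrow> nat option list \<Rightarrow> bool" where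
  "neighboring xs ys \<longleftrightarrow> length xs = length ys \<and>
     card {j. j < length xs \<and> xs ! j \<noteq> ys ! j} \<le> 1"

text \<open>A released data structure answers every query L (a function on vectors).
  The output of a mechanism on a stream is the sequence of data structures, indexed by time.\<close>
type_synonym dstruct = "((nat \<Rightarrow> real) \<Rightarrow> real) \<Rightarrow> real"
type_synonym mechanism = "nat option list \<Rightarrow> (nat \<Rightarrow> dstruct) pmf"

definition prefix_output :: "nat \<Rightarrow> (nat \<Rightarrow> dstruct) \<Rightarrow> (nat \<Rightarrow> dstruct)" where
  "prefix_output t out = (\<lambda>s. if s \<le> t then out s else (\<lambda>_. 0))"

definition continual :: "nat \<Rightarrow> nat \<Rightarrow> mechanism \<Rightarrow> bool" where
  "continual n T M \<longleftrightarrow> (\<forall>xs ys t. valid_stream n T xs \<and> valid_stream n T ys \<and>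
      take t xs = take t ys \<longrightarrow>
      map_pmf (prefix_output t) (M xs) = map_pmf (prefix_output t) (M ys))"

definition event_level_dp :: "nat \<Rightarrow> nat \<Rightarrow> real \<Rightarrow> mechanism \<Rightarrow> bool" where
  "event_level_dp n T \<epsilon> M \<longleftrightarrow> (\<forall>xs ys S. valid_stream n T xs \<and> valid_stream n T ys \<and>
      neighboring xs ys \<longrightarrow>
      measure_pmf.prob (M xs) S \<le> exp \<epsilon> * measure_pmf.prob (M ys) S)"

definition accurate_output :: "nat \<Rightarrow> nat \<Rightarrow> real \<Rightarrow> real \<Rightarrow> nat option list \<Rightarrow> (nat \<Rightarrow> dstruct) \<Rightarrow> bool" where
  "accurate_output n T \<zeta> \<alpha> xs out \<longleftrightarrow>
     (\<forall>t\<in>{1..T}. \<forall>L. mon_sym_norm n L \<longrightarrow>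
        L (freq xs t) / (1 + \<zeta>) - \<alpha> * L e1 \<le> out t L \<and>
        out t L \<le> (1 + \<zeta>) * L (freq xs t) + \<alpha> * L e1)"

end

theory Submission
  imports Defs
begin

text \<open>A neighbouring stream changes every top-k sum of the frequency vector by at most one.
  For every point (c, a) of a logarithmic grid, the mechanism runs an above-threshold test of
  the sum of the k_c largest frequencies against the threshold (1 + \<zeta>/4)^a, with one-sided
  geometric noise, and releases only a function of the stopping times. Raising the threshold
  noise by 1 and the noise at the stopping time by 2 is an injective map of noise vectors that
  reproduces the stopping times on the neighbour at a pmf cost of at most exp \<epsilon>; this gives
  \<epsilon>-DP.

  The stopping times yield upper bounds U_k on all top-k sums that are tight up to the factor
  1 + \<zeta> and the additive term 3E, where E bounds all noise values with probability 2/3 and is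
  polylogarithmic. A query L is answered by the supremum of L over the nonnegative vectors whose
  top-k sums are at most U_k. By Ky Fan dominance (a monotone symmetric norm is monotone under
  domination of all top-k sums), and since adding 3E to a largest coordinate raises every top-k
  sum by 3E, this supremum lies between L(f) and (1 + \<zeta>) L(f) + 3E L(e_1).\<close>

section \<open>Ky Fan dominance\<close>

lemma norm_on_zero: "is_norm_on n L \<Longrightarrow> L (\<lambda>_. 0) = 0"
  unfolding is_norm_on_def rvec_def by simp

lemma rvec_scale: "v \<in> rvec n \<Longrightarrow> (\<lambda>i. c * v i) \<in> rvec n"
  by (simp add: rvec_def)

lemma rvec_add: "v \<in> rvec n \<Longrightarrow> w \<in> rvec n \<Longrightarrow> (\<lambda>i. v i + w i) \<in> rvec n"
  by (simp add: rvec_def)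

lemma rvec_comp_permutes: "v \<in> rvec n \<Longrightarrow> \<sigma> permutes {..<n} \<Longrightarrow> v \<circ> \<sigma> \<in> rvec n"
  unfolding rvec_def by (auto simp: permutes_def)

lemma norm_on_homogeneous:
  "is_norm_on n L \<Longrightarrow> v \<in> rvec n \<Longrightarrow> L (\<lambda>i. c * v i) = \<bar>c\<bar> * L v"
  unfolding is_norm_on_def by blast

lemma norm_on_triangle:
  "is_norm_on n L \<Longrightarrow> v \<in> rvec n \<Longrightarrow> w \<in> rvec n \<Longrightarrow> L (\<lambda>i. v i + w i) \<le> L v + L w"
  unfolding is_norm_on_def by blast

lemma norm_on_nonneg:
  assumes L: "is_norm_on n L" and v: "v \<in> rvec n"
  shows "0 \<le> L v"
proof -
  have "0 = L (\<lambda>i. v i + (-1) * v i)" using norm_on_zero[OF L] by simp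
  also have "\<dots> \<le> L v + L (\<lambda>i. (-1) * v i)" using norm_on_triangle[OF L v rvec_scale[OF v]] .
  also have "\<dots> = 2 * L v" using norm_on_homogeneous[OF L v, of "-1"] by simp
  finally show ?thesis by simp
qed

definition unit_vec :: "nat \<Rightarrow> nat \<Rightarrow> real" where
  "unit_vec j = (\<lambda>i. if i = j then 1 else 0)"

lemma unit_vec_rvec: "j < n \<Longrightarrow> unit_vec j \<in> rvec n"
  unfolding rvec_def unit_vec_def by auto

lemma sum_unit_vec: "finite A \<Longrightarrow> sum (unit_vec j) A = (if j \<in> A then 1 else 0)"
  unfolding unit_vec_def by (simp add: sum.delta)

lemma mon_sym_norm_unit_vec:
  assumes L: "mon_sym_norm n L" and j: "j < n"
  shows "L (unit_vec j) = L e1"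
proof -
  have swap: "Transposition.transpose 0 j permutes {..<n}" using j by (intro permutes_swap_id) auto
  have "unit_vec j = e1 \<circ> Transposition.transpose 0 j"
    unfolding unit_vec_def e1_def by (auto simp: Transposition.transpose_def)
  moreover have "e1 \<in> rvec n" using j unfolding rvec_def e1_def by auto
  ultimately show ?thesis
    using L swap unfolding mon_sym_norm_def symmetric_norm_on_def by metis
qed

lemma mon_sym_norm_mono:
  assumes "mon_sym_norm n L" "v \<in> rvec n" "w \<in> rvec n" "\<forall>i<n. 0 \<le> v i" "\<forall>i<n. v i \<le> w i"
  shows "L v \<le> L w"
proof -
  have "\<forall>i<n. \<bar>v i\<bar> \<le> \<bar>w i\<bar>" using assms(4,5) by force
  then show ?thesis using assms(1-3) unfolding mon_sym_norm_def monotone_norm_on_def by blast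
qed

definition mass_transfer :: "(nat \<Rightarrow> real) \<Rightarrow> nat \<Rightarrow> nat \<Rightarrow> real \<Rightarrow> nat \<Rightarrow> real" where
  "mass_transfer y j l d = (\<lambda>i. y i - d * unit_vec j i + d * unit_vec l i)"

lemma mass_transfer_apply:
  "j \<noteq> l \<Longrightarrow> mass_transfer y j l d i = (if i = j then y j - d else if i = l then y l + d else y i)"
  by (simp add: mass_transfer_def unit_vec_def)

lemma mass_transfer_rvec: "y \<in> rvec n \<Longrightarrow> j < n \<Longrightarrow> l < n \<Longrightarrow> mass_transfer y j l d \<in> rvec n"
  unfolding rvec_def mass_transfer_def unit_vec_def by auto

text \<open>Moving mass d from a larger coordinate j to a smaller one l is a convex combination
  of y and y with j and l swapped.\<close>
lemma mon_sym_norm_mass_transfer_le: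
  assumes L: "mon_sym_norm n L" and y: "y \<in> rvec n" and jl: "j < n" "l < n" "j \<noteq> l"
    and d: "0 \<le> d" "d \<le> y j - y l"
  shows "L (mass_transfer y j l d) \<le> L y"
proof -
  have norm: "is_norm_on n L" and sym: "symmetric_norm_on n L"
    using L by (auto simp: mon_sym_norm_def)
  define \<mu> where "\<mu> = d / (y j - y l)"
  have \<mu>: "0 \<le> \<mu>" "\<mu> \<le> 1" "\<mu> * (y j - y l) = d"
    using d by (auto simp: \<mu>_def divide_le_eq_1)
  define z where "z = y \<circ> Transposition.transpose j l"
  have swap: "Transposition.transpose j l permutes {..<n}" using jl by (intro permutes_swap_id) auto
  have z: "z \<in> rvec n" "L z = L y"
    using rvec_comp_permutes[OF y swap] sym y swap unfolding z_def symmetric_norm_on_def by auto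
  have "mass_transfer y j l d = (\<lambda>i. (1 - \<mu>) * y i + \<mu> * z i)"
    using jl(3) \<mu>(3)
    by (auto simp: mass_transfer_apply z_def Transposition.transpose_def algebra_simps)
  then have "L (mass_transfer y j l d) = L (\<lambda>i. (1 - \<mu>) * y i + \<mu> * z i)" by simp
  also have "\<dots> \<le> L (\<lambda>i. (1 - \<mu>) * y i) + L (\<lambda>i. \<mu> * z i)"
    by (rule norm_on_triangle[OF norm rvec_scale[OF y] rvec_scale[OF z(1)]])
  also have "\<dots> = L y"
    using norm_on_homogeneous[OF norm y, of "1 - \<mu>"] norm_on_homogeneous[OF norm z(1), of \<mu>] \<mu> z(2)
    by (simp add: algebra_simps)
  finally show ?thesis .
qed

lemma prefix_sums_mass_transfer:
  fixes x y :: "nat \<Rightarrow> real"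
  assumes pre: "\<forall>k\<le>n. (\<Sum>i<k. x i) \<le> (\<Sum>i<k. y i)" and jl: "j < l"
    and below: "\<forall>i<l. x i \<le> y i" and d: "d \<le> y j - x j"
  shows "\<forall>k\<le>n. (\<Sum>i<k. x i) \<le> (\<Sum>i<k. mass_transfer y j l d i)"
proof (intro allI impI)
  fix k assume k: "k \<le> n"
  have shifted: "(\<Sum>i<k. mass_transfer y j l d i)
      = (\<Sum>i<k. y i) - (if j < k then d else 0) + (if l < k then d else 0)"
    by (simp add: mass_transfer_def sum.distrib sum_subtractf sum_distrib_left[symmetric] sum_unit_vec)
  show "(\<Sum>i<k. x i) \<le> (\<Sum>i<k. mass_transfer y j l d i)"
  proof (cases "j < k \<and> k \<le> l")
    case True
    have "d \<le> (\<Sum>i<k. if i = j then y j - x j else 0)" using True d by simp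
    also have "\<dots> \<le> (\<Sum>i<k. y i - x i)" using below True by (intro sum_mono) auto
    finally show ?thesis using True by (simp add: shifted sum_subtractf)
  next
    case False
    then show ?thesis using pre k jl by (auto simp: shifted)
  qed
qed

lemma first_surplus_before_first_deficit:
  fixes x y :: "nat \<Rightarrow> real"
  assumes pre: "\<forall>k\<le>n. (\<Sum>i<k. x i) \<le> (\<Sum>i<k. y i)" and deficit: "l0 < n" "y l0 < x l0"
  obtains j l where "j < l" "l < n" "x j < y j" "y l < x l" "\<forall>i<l. x i \<le> y i"
proof -
  define j where "j = (LEAST i. i < n \<and> x i \<noteq> y i)"
  define l where "l = (LEAST i. i < n \<and> y i < x i)"
  have j: "j < n" "x j \<noteq> y j"
    using LeastI[of "\<lambda>i. i < n \<and> x i \<noteq> y i" l0] deficit unfolding j_def[symmetric] by auto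
  have l: "l < n" "y l < x l"
    using LeastI[of "\<lambda>i. i < n \<and> y i < x i" l0] deficit unfolding l_def[symmetric] by auto
  have j_least: "x i = y i" if "i < j" for i
  proof -
    have "\<not> (i < n \<and> x i \<noteq> y i)" using that unfolding j_def by (rule not_less_Least)
    then show ?thesis using that j(1) by simp
  qed
  have l_least: "x i \<le> y i" if "i < l" for i
  proof -
    have "\<not> (i < n \<and> y i < x i)" using that unfolding l_def by (rule not_less_Least)
    then show ?thesis using that l(1) by simp
  qed
  have "(\<Sum>i<Suc j. x i) \<le> (\<Sum>i<Suc j. y i)" using pre j(1) Suc_leI by blast
  moreover have "(\<Sum>i<j. x i) = (\<Sum>i<j. y i)" using j_least by (intro sum.cong) auto
  ultimately have xj: "x j < y j" using j(2) by simp
  have "j < l"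
  proof (rule ccontr)
    assume "\<not> j < l"
    then have "l < j \<or> l = j" by auto
    then show False using j_least[of l] l(2) xj by auto
  qed
  then show thesis using that l xj l_least by blast
qed

text \<open>Moving min (y j - x j) (x l - y l) from the first surplus of y to its first deficit
  preserves the prefix-sum domination and fixes one more coordinate of y to that of x.\<close>
lemma majorization_step:
  fixes x y :: "nat \<Rightarrow> real"
  assumes x: "\<forall>i<n. 0 \<le> x i" and sorted: "\<forall>i j. i \<le> j \<longrightarrow> j < n \<longrightarrow> x j \<le> x i"
    and y: "\<forall>i<n. 0 \<le> y i" and pre: "\<forall>k\<le>n. (\<Sum>i<k. x i) \<le> (\<Sum>i<k. y i)"
    and deficit: "l0 < n" "y l0 < x l0"
  obtains j l d where "j < l" "l < n" "0 \<le> d" "d \<le> y j - y l"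
    and "\<forall>i<n. 0 \<le> mass_transfer y j l d i"
    and "\<forall>k\<le>n. (\<Sum>i<k. x i) \<le> (\<Sum>i<k. mass_transfer y j l d i)"
    and "{i. i < n \<and> x i \<noteq> mass_transfer y j l d i} \<subset> {i. i < n \<and> x i \<noteq> y i}"
proof -
  obtain j l where jl: "j < l" "l < n" and xj: "x j < y j" and yl: "y l < x l"
    and below: "\<forall>i<l. x i \<le> y i"
    using first_surplus_before_first_deficit[OF pre deficit] .
  define d where "d = min (y j - x j) (x l - y l)"
  define y' where "y' = mass_transfer y j l d"
  have y'_apply: "y' i = (if i = j then y j - d else if i = l then y l + d else y i)" for i
    using jl unfolding y'_def by (simp add: mass_transfer_apply)
  have "x l \<le> x j" using sorted jl by simp
  then have d: "0 < d" "d \<le> y j - y l" "d \<le> y j - x j" using xj yl unfolding d_def by auto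
  have "\<forall>i<n. 0 \<le> y' i"
    using x[rule_format, of j] y d(1,3) jl by (auto simp: y'_apply)
  moreover have "\<forall>k\<le>n. (\<Sum>i<k. x i) \<le> (\<Sum>i<k. y' i)"
    unfolding y'_def by (rule prefix_sums_mass_transfer[OF pre jl(1) below d(3)])
  moreover have "{i. i < n \<and> x i \<noteq> y' i} \<subset> {i. i < n \<and> x i \<noteq> y i}" (is "?new \<subset> ?old")
  proof (rule psubsetI)
    show "?new \<subseteq> ?old" using jl xj yl by (auto simp: y'_apply)
    have "y' j = x j \<or> y' l = x l" using jl by (simp add: y'_apply d_def min_def)
    then have "j \<notin> ?new \<or> l \<notin> ?new" by auto
    moreover have "j \<in> ?old" "l \<in> ?old" using jl xj yl by auto
    ultimately show "?new \<noteq> ?old" by blast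
  qed
  ultimately show thesis
    using that[OF jl less_imp_le[OF d(1)] d(2)] unfolding y'_def by blast
qed

lemma mon_sym_norm_le_if_prefix_sums_le:
  assumes L: "mon_sym_norm n L" and x: "x \<in> rvec n" "\<forall>i<n. 0 \<le> x i"
    and sorted: "\<forall>i j. i \<le> j \<longrightarrow> j < n \<longrightarrow> x j \<le> x i"
    and y: "y \<in> rvec n" "\<forall>i<n. 0 \<le> y i" and pre: "\<forall>k\<le>n. (\<Sum>i<k. x i) \<le> (\<Sum>i<k. y i)"
  shows "L x \<le> L y"
  using y pre
proof (induction "card {i. i < n \<and> x i \<noteq> y i}" arbitrary: y rule: less_induct)
  case less
  show ?case
  proof (cases "\<forall>i<n. x i \<le> y i")
    case True
    then show ?thesis using mon_sym_norm_mono[OF L x(1) less.prems(1) x(2)] by blast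
  next
    case False
    then obtain l0 where "l0 < n" "y l0 < x l0" by force
    then obtain j l d where jl: "j < l" "l < n" and d: "0 \<le> d" "d \<le> y j - y l"
      and y': "\<forall>i<n. 0 \<le> mass_transfer y j l d i"
        "\<forall>k\<le>n. (\<Sum>i<k. x i) \<le> (\<Sum>i<k. mass_transfer y j l d i)"
        "{i. i < n \<and> x i \<noteq> mass_transfer y j l d i} \<subset> {i. i < n \<and> x i \<noteq> y i}"
      using majorization_step[OF x(2) sorted less.prems(2) less.prems(3)] by blast
    have "L x \<le> L (mass_transfer y j l d)"
      using less.hyps[OF psubset_card_mono[OF _ y'(3)] mass_transfer_rvec y'(1,2)] less.prems(1) jl
      by simp
    also have "\<dots> \<le> L y" using mon_sym_norm_mass_transfer_le[OF L less.prems(1)] jl d by simp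
    finally show ?thesis .
  qed
qed

definition ksets :: "nat \<Rightarrow> nat \<Rightarrow> nat set set" where
  "ksets n k = {A. A \<subseteq> {..<n} \<and> card A = k}"

definition topk :: "nat \<Rightarrow> nat \<Rightarrow> (nat \<Rightarrow> real) \<Rightarrow> real" where
  "topk n k v = Max ((\<lambda>A. sum v A) ` ksets n k)"

lemma finite_ksets: "finite (ksets n k)"
  by (rule finite_subset[of _ "Pow {..<n}"]) (auto simp: ksets_def)

lemma ksets_finite: "A \<in> ksets n k \<Longrightarrow> finite A"
  unfolding ksets_def by (auto intro: finite_subset[of _ "{..<n}"])

lemma lessThan_in_ksets: "k \<le> n \<Longrightarrow> {..<k} \<in> ksets n k"
  unfolding ksets_def by auto

lemma sum_le_topk: "A \<in> ksets n k \<Longrightarrow> sum v A \<le> topk n k v"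
  unfolding topk_def by (rule Max_ge) (use finite_ksets in auto)

lemma topk_attained:
  assumes "k \<le> n" obtains A where "A \<in> ksets n k" "topk n k v = sum v A"
proof -
  have "topk n k v \<in> (\<lambda>A. sum v A) ` ksets n k"
    unfolding topk_def using finite_ksets lessThan_in_ksets[OF assms] by (intro Max_in) auto
  then show thesis using that by blast
qed

lemma topk_leI: "k \<le> n \<Longrightarrow> (\<And>A. A \<in> ksets n k \<Longrightarrow> sum v A \<le> c) \<Longrightarrow> topk n k v \<le> c"
  by (metis topk_attained)

lemma topk_nonneg: "k \<le> n \<Longrightarrow> \<forall>i<n. 0 \<le> v i \<Longrightarrow> 0 \<le> topk n k v"
  using sum_le_topk[OF lessThan_in_ksets, of k n v] sum_nonneg[of "{..<k}" v] by force

lemma exists_sorting_permutation: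
  fixes v :: "nat \<Rightarrow> real"
  obtains \<sigma> where "\<sigma> permutes {..<n}" "\<forall>i j. i \<le> j \<longrightarrow> j < n \<longrightarrow> v (\<sigma> j) \<le> v (\<sigma> i)"
proof -
  define xs where "xs = map v [0..<n]"
  have "mset (sort_key uminus xs) = mset xs" by simp
  then obtain p where p: "p permutes {..<length xs}" "permute_list p xs = sort_key uminus xs"
    by (rule mset_eq_permutation)
  have n: "length xs = n" by (simp add: xs_def)
  have nth: "sort_key uminus xs ! i = v (p i)" if "i < n" for i
  proof -
    have "p i < n" using permutes_in_image[OF p(1)] that n by simp
    have "sort_key uminus xs ! i = permute_list p xs ! i" using p(2) by simp
    also have "\<dots> = xs ! p i" using permute_list_nth[OF p(1)] that n by simp
    finally show ?thesis using \<open>p i < n\<close> by (simp add: xs_def)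
  qed
  have "sorted (map uminus (sort_key uminus xs))" by simp
  then have "v (p j) \<le> v (p i)" if "i \<le> j" "j < n" for i j
    using sorted_nth_mono[of "map uminus (sort_key uminus xs)" i j] that nth[of i] nth[of j] n by simp
  then show thesis using that p(1) n by blast
qed

lemma sum_le_prefix_sum_if_antimono:
  fixes w :: "nat \<Rightarrow> real"
  assumes anti: "\<forall>i j. i \<le> j \<longrightarrow> j < n \<longrightarrow> w j \<le> w i" and B: "B \<in> ksets n k"
  shows "sum w B \<le> (\<Sum>i<k. w i)"
proof -
  have Bn: "B \<subseteq> {..<n}" and cardB: "card B = k" using B by (auto simp: ksets_def)
  have finB: "finite B" by (rule finite_subset[OF Bn]) simp
  have kn: "k \<le> n" using card_mono[OF _ Bn] cardB by simp
  define P where "P = {..<k}"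
  define m where "m = w (k - 1)"
  have card_eq: "card (B - P) = card (P - B)"
    using card_Int_Diff[OF finB, of P] card_Int_Diff[of P B] cardB by (simp add: P_def Int_commute)
  have "sum w (B - P) \<le> of_nat (card (B - P)) * m"
  proof (rule sum_bounded_above)
    fix i assume "i \<in> B - P"
    then have "k - 1 \<le> i" "i < n" using Bn by (auto simp: P_def)
    then show "w i \<le> m" unfolding m_def using anti by blast
  qed
  also have "\<dots> \<le> sum w (P - B)"
    unfolding card_eq
  proof (rule sum_bounded_below)
    fix i assume "i \<in> P - B"
    then have "i \<le> k - 1" "k - 1 < n" using kn by (auto simp: P_def)
    then show "m \<le> w i" unfolding m_def using anti by blast
  qed
  finally have "sum w (B \<inter> P) + sum w (B - P) \<le> sum w (B \<inter> P) + sum w (P - B)"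
    by simp
  then show ?thesis
    using sum.Int_Diff[OF finB, of w P] sum.Int_Diff[of P w B] by (simp add: P_def Int_commute)
qed

lemma topk_eq_sorted_prefix_sum:
  assumes \<sigma>: "\<sigma> permutes {..<n}" and sorted: "\<forall>i j. i \<le> j \<longrightarrow> j < n \<longrightarrow> v (\<sigma> j) \<le> v (\<sigma> i)"
    and k: "k \<le> n"
  shows "topk n k v = (\<Sum>i<k. v (\<sigma> i))"
proof (rule antisym)
  obtain A where A: "A \<in> ksets n k" "topk n k v = sum v A" using topk_attained[OF k] .
  have inv: "inv \<sigma> permutes {..<n}" by (rule permutes_inv[OF \<sigma>])
  have "A = \<sigma> ` (inv \<sigma> ` A)" using permutes_inv_o(1)[OF \<sigma>] by (simp add: image_comp)
  then have "sum v A = sum (v \<circ> \<sigma>) (inv \<sigma> ` A)"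
    using sum.reindex[OF permutes_inj_on[OF \<sigma>]] by metis
  also have "\<dots> \<le> (\<Sum>i<k. (v \<circ> \<sigma>) i)"
  proof (rule sum_le_prefix_sum_if_antimono[where n = n])
    show "inv \<sigma> ` A \<in> ksets n k"
      using A(1) permutes_in_image[OF inv] card_image[OF permutes_inj_on[OF inv]]
      by (auto simp: ksets_def)
  qed (use sorted in simp)
  finally show "topk n k v \<le> (\<Sum>i<k. v (\<sigma> i))" using A(2) by simp
next
  have "\<sigma> ` {..<k} \<in> ksets n k"
    using k permutes_in_image[OF \<sigma>] card_image[OF permutes_inj_on[OF \<sigma>]] by (auto simp: ksets_def)
  then have "sum v (\<sigma> ` {..<k}) \<le> topk n k v" by (rule sum_le_topk)
  then show "(\<Sum>i<k. v (\<sigma> i)) \<le> topk n k v" by (simp add: sum.reindex[OF permutes_inj_on[OF \<sigma>]])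
qed

lemma mon_sym_norm_le_if_topk_le:
  assumes L: "mon_sym_norm n L" and x: "x \<in> rvec n" "\<forall>i<n. 0 \<le> x i"
    and y: "y \<in> rvec n" "\<forall>i<n. 0 \<le> y i"
    and dom: "\<And>k. 1 \<le> k \<Longrightarrow> k \<le> n \<Longrightarrow> topk n k x \<le> topk n k y"
  shows "L x \<le> L y"
proof -
  have sym: "symmetric_norm_on n L" using L by (simp add: mon_sym_norm_def)
  obtain \<sigma> where \<sigma>: "\<sigma> permutes {..<n}" "\<forall>i j. i \<le> j \<longrightarrow> j < n \<longrightarrow> x (\<sigma> j) \<le> x (\<sigma> i)"
    by (rule exists_sorting_permutation)
  obtain \<tau> where \<tau>: "\<tau> permutes {..<n}" "\<forall>i j. i \<le> j \<longrightarrow> j < n \<longrightarrow> y (\<tau> j) \<le> y (\<tau> i)"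
    by (rule exists_sorting_permutation)
  have "(\<Sum>i<k. (x \<circ> \<sigma>) i) \<le> (\<Sum>i<k. (y \<circ> \<tau>) i)" if k: "k \<le> n" for k
  proof (cases "k = 0")
    case False
    then have "topk n k x \<le> topk n k y" using dom k by simp
    then show ?thesis using topk_eq_sorted_prefix_sum[OF \<sigma> k] topk_eq_sorted_prefix_sum[OF \<tau> k] by simp
  qed simp
  moreover have "\<forall>i<n. 0 \<le> (x \<circ> \<sigma>) i" "\<forall>i<n. 0 \<le> (y \<circ> \<tau>) i"
    using x(2) y(2) permutes_in_image[OF \<sigma>(1)] permutes_in_image[OF \<tau>(1)] by auto
  ultimately have "L (x \<circ> \<sigma>) \<le> L (y \<circ> \<tau>)"
    using mon_sym_norm_le_if_prefix_sums_le[OF L rvec_comp_permutes[OF x(1) \<sigma>(1)] _ _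
        rvec_comp_permutes[OF y(1) \<tau>(1)]] \<sigma>(2) by auto
  moreover have "L (x \<circ> \<sigma>) = L x" "L (y \<circ> \<tau>) = L y"
    using sym x(1) y(1) \<sigma>(1) \<tau>(1) unfolding symmetric_norm_on_def by auto
  ultimately show ?thesis by simp
qed

lemma topk_mono_k:
  assumes k: "k \<le> k'" "k' \<le> n" and v: "\<forall>i<n. 0 \<le> v i"
  shows "topk n k v \<le> topk n k' v"
proof -
  obtain A where A: "A \<in> ksets n k" "topk n k v = sum v A"
    using topk_attained[OF order_trans[OF k]] .
  have An: "A \<subseteq> {..<n}" "card A = k" and finA: "finite A"
    using A(1) ksets_finite[OF A(1)] by (auto simp: ksets_def)
  have "k' - k \<le> card ({..<n} - A)" using An finA k by (simp add: card_Diff_subset)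
  then obtain C where C: "C \<subseteq> {..<n} - A" "card C = k' - k" "finite C"
    by (rule obtain_subset_with_card_n)
  have "card (A \<union> C) = k'"
    using card_Un_disjoint[OF finA C(3)] C(1,2) An(2) k(1) by auto
  then have AC: "A \<union> C \<in> ksets n k'" using An(1) C(1) by (auto simp: ksets_def)
  have "sum v A \<le> sum v (A \<union> C)"
    by (rule sum_mono2) (use finA C v in auto)
  then show ?thesis using A(2) sum_le_topk[OF AC, of v] by linarith
qed

text \<open>Averaging over the k + 1 subsets of size k of an optimal (k + 1)-set.\<close>
lemma topk_Suc_le:
  assumes "Suc k \<le> n"
  shows "real k * topk n (Suc k) v \<le> real (Suc k) * topk n k v"
proof -
  obtain A where A: "A \<in> ksets n (Suc k)" "topk n (Suc k) v = sum v A"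
    using topk_attained[OF assms] .
  have finA: "finite A" and cardA: "card A = Suc k" using A(1) ksets_finite[OF A(1)] by (auto simp: ksets_def)
  have "real k * sum v A = (\<Sum>j\<in>A. sum v (A - {j}))"
    using finA cardA by (simp add: sum_diff1 sum_subtractf algebra_simps)
  also have "\<dots> \<le> (\<Sum>j\<in>A. topk n k v)"
    using A(1) finA cardA by (intro sum_mono sum_le_topk) (auto simp: ksets_def)
  finally show ?thesis using A(2) cardA by simp
qed

lemma topk_le_ratio:
  assumes "1 \<le> k" "k \<le> k'" "k' \<le> n"
  shows "topk n k' v \<le> real k' / real k * topk n k v"
proof -
  have "topk n k' v / real k' \<le> topk n k v / real k"
    using assms(2,3)
  proof (induction k' rule: dec_induct)
    case (step m)
    have "real m * topk n (Suc m) v \<le> real (Suc m) * topk n m v" using topk_Suc_le step by simp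
    then have "topk n (Suc m) v / real (Suc m) \<le> topk n m v / real m"
      using step assms(1) by (simp add: field_simps)
    then show ?case using step by simp
  qed simp
  then show ?thesis using assms by (simp add: field_simps)
qed

lemma topk_attained_containing_max:
  assumes j: "j < n" "\<forall>i<n. f i \<le> f j" and k: "1 \<le> k" "k \<le> n"
  obtains A where "A \<in> ksets n k" "j \<in> A" "topk n k f = sum f A"
proof -
  obtain A where A: "A \<in> ksets n k" "topk n k f = sum f A" using topk_attained[OF k(2)] .
  have finA: "finite A" and An: "A \<subseteq> {..<n}" "card A = k"
    using A(1) ksets_finite[OF A(1)] by (auto simp: ksets_def)
  show thesis
  proof (cases "j \<in> A")
    case True
    then show thesis using that A by blast
  next
    case False
    obtain i where i: "i \<in> A" using An(2) k(1) by fastforce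
    define A' where "A' = insert j (A - {i})"
    have A': "A' \<in> ksets n k"
      using finA An i j(1) False k(1) by (auto simp: A'_def ksets_def card_insert_if)
    have "sum f A' = sum f A - f i + f j"
      using finA i False by (simp add: A'_def sum_diff1)
    moreover have "f i \<le> f j" using i An(1) j(2) by auto
    ultimately have "topk n k f = sum f A'"
      using A(2) sum_le_topk[OF A', of f] by linarith
    then show thesis using that[OF A'] by (simp add: A'_def)
  qed
qed

lemma topk_scale_add_unit_vec:
  assumes j: "j < n" "\<forall>i<n. f i \<le> f j" and c: "0 \<le> c" and k: "1 \<le> k" "k \<le> n"
  shows "c * topk n k f + a \<le> topk n k (\<lambda>i. c * f i + a * unit_vec j i)"
proof -
  obtain A where A: "A \<in> ksets n k" "j \<in> A" "topk n k f = sum f A"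
    using topk_attained_containing_max[OF j k] .
  have "c * topk n k f + a = sum (\<lambda>i. c * f i + a * unit_vec j i) A"
    using A ksets_finite[OF A(1)] by (simp add: sum.distrib sum_distrib_left[symmetric] sum_unit_vec)
  also have "\<dots> \<le> topk n k (\<lambda>i. c * f i + a * unit_vec j i)" by (rule sum_le_topk[OF A(1)])
  finally show ?thesis .
qed

definition topk_envelope :: "nat \<Rightarrow> (nat \<Rightarrow> real) \<Rightarrow> (nat \<Rightarrow> real) set" where
  "topk_envelope n U =
     {v \<in> rvec n. (\<forall>i<n. 0 \<le> v i) \<and> (\<forall>k. 1 \<le> k \<and> k \<le> n \<longrightarrow> topk n k v \<le> U k)}"

text \<open>Every vector of the envelope is dominated, in all top-k sums, by f inflated by 1 + z
  with B added at a largest coordinate.\<close>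
lemma Sup_norm_topk_envelope:
  assumes L: "mon_sym_norm n L" and n: "1 \<le> n" and f: "f \<in> rvec n" "\<forall>i<n. 0 \<le> f i"
    and z: "0 \<le> z" and B: "0 \<le> B"
    and U: "\<And>k. 1 \<le> k \<Longrightarrow> k \<le> n \<Longrightarrow> topk n k f \<le> U k \<and> U k \<le> (1 + z) * topk n k f + B"
  shows "L f \<le> Sup (L ` topk_envelope n U)" "Sup (L ` topk_envelope n U) \<le> (1 + z) * L f + B * L e1"
proof -
  have norm: "is_norm_on n L" using L by (simp add: mon_sym_norm_def)
  have "Max (f ` {..<n}) \<in> f ` {..<n}" using n by (intro Max_in) (auto simp: lessThan_empty_iff)
  then obtain j where j: "j < n" "f j = Max (f ` {..<n})" by auto
  then have j: "j < n" "\<forall>i<n. f i \<le> f j" by simp_all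
  define y where "y = (\<lambda>i. (1 + z) * f i + B * unit_vec j i)"
  have uj: "unit_vec j \<in> rvec n" by (rule unit_vec_rvec[OF j(1)])
  have y: "y \<in> rvec n" "\<forall>i<n. 0 \<le> y i"
    using rvec_add[OF rvec_scale[OF f(1)] rvec_scale[OF uj]] f(2) z B
    by (auto simp: y_def unit_vec_def)
  have "L y \<le> L (\<lambda>i. (1 + z) * f i) + L (\<lambda>i. B * unit_vec j i)"
    unfolding y_def by (rule norm_on_triangle[OF norm rvec_scale[OF f(1)] rvec_scale[OF uj]])
  also have "\<dots> = (1 + z) * L f + B * L e1"
    using norm_on_homogeneous[OF norm f(1), of "1 + z"] norm_on_homogeneous[OF norm uj, of B]
      mon_sym_norm_unit_vec[OF L j(1)] z B by simp
  finally have Ly: "L y \<le> (1 + z) * L f + B * L e1" .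
  have bound: "L v \<le> (1 + z) * L f + B * L e1" if v: "v \<in> topk_envelope n U" for v
  proof -
    have "L v \<le> L y"
    proof (rule mon_sym_norm_le_if_topk_le[OF L _ _ y])
      fix k assume k: "1 \<le> k" "k \<le> n"
      have "topk n k v \<le> (1 + z) * topk n k f + B" using v U[OF k] k by (force simp: topk_envelope_def)
      also have "\<dots> \<le> topk n k y" unfolding y_def by (rule topk_scale_add_unit_vec[OF j _ k]) (use z in simp)
      finally show "topk n k v \<le> topk n k y" .
    qed (use v in \<open>auto simp: topk_envelope_def\<close>)
    then show ?thesis using Ly by simp
  qed
  have f_env: "f \<in> topk_envelope n U" using f U by (simp add: topk_envelope_def)
  have "bdd_above (L ` topk_envelope n U)" using bound by (intro bdd_aboveI) auto
  then show "L f \<le> Sup (L ` topk_envelope n U)" using f_env by (intro cSup_upper) auto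
  show "Sup (L ` topk_envelope n U) \<le> (1 + z) * L f + B * L e1"
    using f_env bound by (intro cSup_least) auto
qed

section \<open>Frequency vectors of neighbouring streams\<close>

definition count_in :: "nat option list \<Rightarrow> nat \<Rightarrow> nat set \<Rightarrow> nat" where
  "count_in xs t A = card {j. j < t \<and> j < length xs \<and> (\<exists>i\<in>A. xs ! j = Some i)}"

lemma sum_freq: "finite A \<Longrightarrow> sum (freq xs t) A = real (count_in xs t A)"
proof -
  assume A: "finite A"
  define S where "S i = {j. j < t \<and> j < length xs \<and> xs ! j = Some i}" for i
  have "sum (freq xs t) A = real (\<Sum>i\<in>A. card (S i))" unfolding freq_def S_def by simp
  also have "(\<Sum>i\<in>A. card (S i)) = card (\<Union>i\<in>A. S i)"
    using A by (intro card_UN_disjoint[symmetric]) (auto simp: S_def)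
  also have "(\<Union>i\<in>A. S i) = {j. j < t \<and> j < length xs \<and> (\<exists>i\<in>A. xs ! j = Some i)}"
    unfolding S_def by auto
  finally show ?thesis unfolding count_in_def .
qed

lemma count_in_le_length: "count_in xs t A \<le> length xs"
  unfolding count_in_def by (rule order_trans[OF card_mono[of "{..<length xs}"]]) auto

lemma count_in_mono: "t \<le> t' \<Longrightarrow> count_in xs t A \<le> count_in xs t' A"
  unfolding count_in_def by (rule card_mono) auto

lemma neighboring_sym:
  assumes "neighboring xs ys" shows "neighboring ys xs"
proof -
  have len: "length ys = length xs" and card: "card {j. j < length xs \<and> xs ! j \<noteq> ys ! j} \<le> 1"
    using assms by (auto simp: neighboring_def)
  moreover have "{j. j < length ys \<and> ys ! j \<noteq> xs ! j} = {j. j < length xs \<and> xs ! j \<noteq> ys ! j}"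
    using len by auto
  ultimately show ?thesis unfolding neighboring_def by metis
qed

lemma count_in_neighboring:
  assumes "neighboring xs ys" shows "count_in xs t A \<le> count_in ys t A + 1"
proof -
  define D where "D = {j. j < length xs \<and> xs ! j \<noteq> ys ! j}"
  define Sx where "Sx = {j. j < t \<and> j < length xs \<and> (\<exists>i\<in>A. xs ! j = Some i)}"
  define Sy where "Sy = {j. j < t \<and> j < length ys \<and> (\<exists>i\<in>A. ys ! j = Some i)}"
  have D: "finite D" "card D \<le> 1" using assms by (auto simp: neighboring_def D_def)
  have "Sx - D \<subseteq> Sy" using assms by (auto simp: neighboring_def Sx_def Sy_def D_def)
  then have "card Sx \<le> card D + card Sy"
    using card_Int_Diff[of Sx D] card_mono[OF D(1), of "Sx \<inter> D"] card_mono[of Sy "Sx - D"]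
    by (force simp: Sx_def Sy_def)
  then show ?thesis using D(2) unfolding count_in_def Sx_def[symmetric] Sy_def[symmetric] by simp
qed

lemma freq_nonneg: "0 \<le> freq xs t i"
  unfolding freq_def by simp

lemma freq_rvec:
  assumes "valid_stream n T xs" shows "freq xs t \<in> rvec n"
proof -
  have "xs ! j \<noteq> Some i" if "j < length xs" "n \<le> i" for i j
    using assms nth_mem[OF that(1)] that(2) by (auto simp: valid_stream_def)
  then show ?thesis unfolding rvec_def freq_def by auto
qed

lemma freq_take_eq:
  assumes "length xs = length ys" "take t xs = take t ys" "t' \<le> t"
  shows "freq xs t' = freq ys t'"
proof -
  have "xs ! j = ys ! j" if "j < t'" "j < length xs" for j
    using that assms nth_take[of j t xs] nth_take[of j t ys] by simp
  then show ?thesis unfolding freq_def using assms(1) by (intro ext arg_cong[where f = "\<lambda>S. real (card S)"]) auto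
qed

lemma topk_freq_in_Nats: "k \<le> n \<Longrightarrow> topk n k (freq xs t) \<in> \<nat>"
  by (metis topk_attained ksets_finite sum_freq of_nat_in_Nats)

lemma topk_freq_le_length: "k \<le> n \<Longrightarrow> topk n k (freq xs t) \<le> real (length xs)"
  by (rule topk_leI) (simp_all add: ksets_finite sum_freq count_in_le_length)

lemma topk_freq_mono:
  assumes "k \<le> n" "t \<le> t'" shows "topk n k (freq xs t) \<le> topk n k (freq xs t')"
proof (rule topk_leI[OF assms(1)])
  fix A assume A: "A \<in> ksets n k"
  have "sum (freq xs t) A \<le> sum (freq xs t') A"
    using count_in_mono[OF assms(2)] by (simp add: sum_freq ksets_finite[OF A])
  also have "\<dots> \<le> topk n k (freq xs t')" by (rule sum_le_topk[OF A])
  finally show "sum (freq xs t) A \<le> topk n k (freq xs t')" .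
qed

lemma topk_freq_neighboring:
  assumes "neighboring xs ys" "k \<le> n"
  shows "topk n k (freq xs t) \<le> topk n k (freq ys t) + 1"
proof (rule topk_leI[OF assms(2)])
  fix A assume A: "A \<in> ksets n k"
  have "sum (freq xs t) A \<le> sum (freq ys t) A + 1"
    using count_in_neighboring[OF assms(1), of t A] by (simp add: sum_freq ksets_finite[OF A])
  also have "\<dots> \<le> topk n k (freq ys t) + 1" using sum_le_topk[OF A] by simp
  finally show "sum (freq xs t) A \<le> topk n k (freq ys t) + 1" .
qed

section \<open>Hitting times and geometric noise\<close>

text \<open>The first time in 1..T at which P holds, and T + 1 if there is none.\<close>
definition first_hit :: "nat \<Rightarrow> (nat \<Rightarrow> bool) \<Rightarrow> nat" where
  "first_hit T P = (LEAST t. 1 \<le> t \<and> (t \<le> T \<longrightarrow> P t))"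

lemma first_hit_range: "1 \<le> first_hit T P" "first_hit T P \<le> Suc T"
  unfolding first_hit_def by (auto intro: LeastI2[of _ "Suc T"] Least_le)

lemma first_hit_hit: "first_hit T P \<le> T \<Longrightarrow> P (first_hit T P)"
  using LeastI[of "\<lambda>t. 1 \<le> t \<and> (t \<le> T \<longrightarrow> P t)" "Suc T"] by (simp add: first_hit_def)

lemma first_hit_before: "1 \<le> t \<Longrightarrow> t < first_hit T P \<Longrightarrow> \<not> P t"
  unfolding first_hit_def using first_hit_range(2)[of T P] not_less_Least[of t]
  by (fastforce simp: first_hit_def)

lemma first_hit_le_iff: "s \<le> T \<Longrightarrow> first_hit T P \<le> s \<longleftrightarrow> (\<exists>t. 1 \<le> t \<and> t \<le> s \<and> P t)"
  using first_hit_range[of T P] first_hit_hit[of T P] first_hit_before[of _ T P]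
  by (meson le_trans not_le)

lemma first_hit_eqI:
  assumes before: "\<And>t. 1 \<le> t \<Longrightarrow> t < first_hit T P \<Longrightarrow> \<not> Q t"
    and hit: "first_hit T P \<le> T \<Longrightarrow> Q (first_hit T P)"
  shows "first_hit T Q = first_hit T P"
proof (rule antisym)
  show "first_hit T Q \<le> first_hit T P"
  proof (cases "first_hit T P \<le> T")
    case True
    then show ?thesis using first_hit_le_iff[OF True, of Q] hit first_hit_range[of T P] by blast
  qed (use first_hit_range[of T Q] in simp)
  show "first_hit T P \<le> first_hit T Q"
  proof (rule ccontr)
    assume "\<not> first_hit T P \<le> first_hit T Q"
    then show False
      using before[of "first_hit T Q"] first_hit_hit[of T Q] first_hit_range[of T P] first_hit_range[of T Q]
      by simp
  qed
qed

lemma measure_pmf_le_if_pmf_le: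
  assumes c: "0 \<le> c" and le: "\<And>x. pmf p x \<le> c * pmf q x"
  shows "measure_pmf.prob p A \<le> c * measure_pmf.prob q A"
proof -
  have "measure_pmf.prob p A = infsetsum (pmf p) A" by (rule measure_pmf_conv_infsetsum)
  also have "\<dots> \<le> infsetsum (\<lambda>x. c * pmf q x) A" using le by (intro infsetsum_mono) auto
  also have "\<dots> = c * measure_pmf.prob q A"
    by (subst infsetsum_cmult_right) (auto simp: measure_pmf_conv_infsetsum)
  finally show ?thesis .
qed

lemma measure_pmf_le_image_if_pmf_le:
  assumes h: "inj h" and c: "0 \<le> c" and le: "\<And>w. pmf p w \<le> c * pmf p (h w)"
  shows "measure_pmf.prob p A \<le> c * measure_pmf.prob p (h ` A)"
proof -
  have inj: "inj_on h A" using h by (rule inj_on_subset) simp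
  note summable = abs_summable_on_reindex_iff[OF inj, of "pmf p", THEN iffD2, OF pmf_abs_summable]
  have "measure_pmf.prob p A = infsetsum (pmf p) A" by (rule measure_pmf_conv_infsetsum)
  also have "\<dots> \<le> infsetsum (\<lambda>w. c * pmf p (h w)) A"
    using summable le by (intro infsetsum_mono) auto
  also have "\<dots> = c * infsetsum (\<lambda>w. pmf p (h w)) A"
    using summable by (intro infsetsum_cmult_right)
  also have "infsetsum (\<lambda>w. pmf p (h w)) A = measure_pmf.prob p (h ` A)"
    using infsetsum_reindex_bij_betw[OF inj_on_imp_bij_betw[OF inj]]
    by (simp add: measure_pmf_conv_infsetsum)
  finally show ?thesis .
qed

lemma pmf_Pi_geometric_shift:
  assumes D: "finite D" and p: "0 < p" "p \<le> 1" and \<delta>: "\<And>x. x \<notin> D \<Longrightarrow> \<delta> x = 0"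
  shows "pmf (Pi_pmf D 0 (\<lambda>_. geometric_pmf p)) (\<lambda>x. w x + \<delta> x)
       = (1 - p) ^ (\<Sum>x\<in>D. \<delta> x) * pmf (Pi_pmf D 0 (\<lambda>_. geometric_pmf p)) w"
proof (cases "\<forall>x. x \<notin> D \<longrightarrow> w x = 0")
  case True
  have "(\<Prod>x\<in>D. (1 - p) ^ (w x + \<delta> x) * p) = (\<Prod>x\<in>D. (1 - p) ^ \<delta> x) * (\<Prod>x\<in>D. (1 - p) ^ w x * p)"
    by (simp add: power_add prod.distrib mult_ac)
  then show ?thesis using True \<delta> p by (simp add: pmf_Pi[OF D] power_sum)
next
  case False
  then show ?thesis using \<delta> by (auto simp: pmf_Pi[OF D])
qed

lemma geometric_pmf_tail:
  assumes p: "0 < p" "p \<le> 1"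
  shows "measure_pmf.prob (geometric_pmf p) {m. k \<le> m} = (1 - p) ^ k"
proof (induction k)
  case (Suc k)
  have "{m. k \<le> m} = {k} \<union> {m. Suc k \<le> m}" by auto
  then have "measure_pmf.prob (geometric_pmf p) {m. k \<le> m}
      = measure_pmf.prob (geometric_pmf p) {k} + measure_pmf.prob (geometric_pmf p) {m. Suc k \<le> m}"
    by (simp only:) (rule measure_pmf.finite_measure_Union; auto)
  then have "measure_pmf.prob (geometric_pmf p) {m. Suc k \<le> m} = (1 - p) ^ k - (1 - p) ^ k * p"
    using Suc p by (simp add: measure_pmf_single)
  then show ?case by (simp add: algebra_simps)
qed simp

section \<open>The grid of above-threshold tests\<close>

lemma exists_power_between:
  fixes b y :: real
  assumes b: "1 < b" and y: "1 \<le> y" "y \<le> b ^ m"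
  obtains a where "a \<le> m" "y \<le> b ^ a" "b ^ a \<le> b * y"
proof -
  define a where "a = (LEAST a. y \<le> b ^ a)"
  have "y \<le> b ^ a" unfolding a_def by (rule LeastI[of _ m]) (rule y(2))
  moreover have "a \<le> m" unfolding a_def by (rule Least_le) (rule y(2))
  moreover have "b ^ a \<le> b * y"
  proof (cases a)
    case 0
    then show ?thesis using b y(1) mult_mono[of 1 b 1 y] by simp
  next
    case (Suc c)
    then have "\<not> y \<le> b ^ c" using not_less_Least[of c "\<lambda>a. y \<le> b ^ a"] by (simp add: a_def)
    then show ?thesis using Suc b by simp
  qed
  ultimately show thesis using that by blast
qed

lemma of_int_less_imp_le_diff_one:
  "real_of_int a < real_of_int b \<Longrightarrow> real_of_int a \<le> real_of_int b - 1"
proof -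
  assume "real_of_int a < real_of_int b"
  then have "a \<le> b - 1" by simp
  then show ?thesis by (metis of_int_1 of_int_diff of_int_le_iff)
qed

type_synonym noise_vec = "(nat \<times> nat) \<times> nat \<Rightarrow> nat"

locale grid_mechanism =
  fixes n T :: nat and eps zeta :: real
  assumes n: "1 \<le> n" and T: "1 \<le> T" and eps: "0 < eps" and zeta: "0 < zeta" "zeta \<le> 1/2"
begin

definition eta :: real where
  "eta = zeta / 4"

definition logNT :: real where
  "logNT = ln (real n * real T + 2)"

definition gmax :: nat where
  "gmax = nat \<lceil>8 * logNT / zeta\<rceil>"

definition Grid :: "(nat \<times> nat) set" where
  "Grid = {..gmax} \<times> {..gmax}"

definition grid_k :: "nat \<Rightarrow> nat" where
  "grid_k c = min n (nat \<lfloor>(1 + eta) ^ c\<rfloor>)"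

definition threshold :: "nat \<Rightarrow> real" where
  "threshold a = real_of_int \<lfloor>(1 + eta) ^ a\<rfloor>"

definition eps0 :: real where
  "eps0 = eps / (3 * real (card Grid))"

definition geom_p :: real where
  "geom_p = 1 - exp (- eps0)"

definition Noise_Idx :: "((nat \<times> nat) \<times> nat) set" where
  "Noise_Idx = Grid \<times> {..T}"

definition noise :: "noise_vec pmf" where
  "noise = Pi_pmf Noise_Idx 0 (\<lambda>_. geometric_pmf geom_p)"

definition noise_bound :: nat where
  "noise_bound = nat \<lfloor>ln (3 * real (card Noise_Idx)) / eps0\<rfloor>"

definition query :: "nat \<Rightarrow> nat option list \<Rightarrow> nat \<Rightarrow> real" where
  "query c xs t = topk n (grid_k c) (freq xs t)"

text \<open>Grid point (c, a) runs an above-threshold test of query c against threshold a, with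
  threshold noise w ((c, a), 0) and fresh query noise w ((c, a), t) at every time t.\<close>
definition fires :: "nat \<times> nat \<Rightarrow> nat option list \<Rightarrow> noise_vec \<Rightarrow> nat \<Rightarrow> bool" where
  "fires i xs w t \<longleftrightarrow>
   threshold (snd i) + real (w (i, 0)) \<le> query (fst i) xs t + real (w (i, t))"

definition stop_time :: "nat \<times> nat \<Rightarrow> nat option list \<Rightarrow> noise_vec \<Rightarrow> nat" where
  "stop_time i xs w = first_hit T (fires i xs w)"

definition stop_times :: "nat option list \<Rightarrow> noise_vec \<Rightarrow> nat \<times> nat \<Rightarrow> nat" where
  "stop_times xs w = restrict (\<lambda>i. stop_time i xs w) Grid"

text \<open>S is the set of grid points that have stopped. If c has not crossed threshold a, then
  query c < threshold a + noise_bound, and both sides are integers; T is the trivial bound.\<close>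
definition query_ub :: "(nat \<times> nat) set \<Rightarrow> nat \<Rightarrow> real" where
  "query_ub S c = Min (insert (real T)
   ((\<lambda>a. threshold a + real noise_bound - 1) ` {a. a \<le> gmax \<and> (c, a) \<notin> S}))"

definition topk_ub :: "(nat \<times> nat) set \<Rightarrow> nat \<Rightarrow> real" where
  "topk_ub S k = Min (query_ub S ` {c. c \<le> gmax \<and> k \<le> grid_k c})"

definition release :: "(nat \<times> nat \<Rightarrow> nat) \<Rightarrow> nat \<Rightarrow> dstruct" where
  "release \<sigma> =
   (\<lambda>s L. Sup (L ` topk_envelope n (topk_ub {i. \<sigma> i \<le> s})))"

definition mech :: mechanism where
  "mech xs = map_pmf (release \<circ> stop_times xs) noise"

lemma eta_bounds: "0 < eta" "eta \<le> 1/8"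
  using zeta by (auto simp: eta_def)

lemma finite_Grid: "finite Grid" and card_Grid: "card Grid = Suc gmax * Suc gmax"
  by (simp_all add: Grid_def card_cartesian_product)

lemma finite_Noise_Idx: "finite Noise_Idx" and card_Noise_Idx: "card Noise_Idx = card Grid * Suc T"
  by (simp_all add: Noise_Idx_def finite_Grid card_cartesian_product)

lemma card_Grid_pos: "0 < card Grid"
  by (simp add: card_Grid)

lemma eps0_pos: "0 < eps0"
  using eps card_Grid_pos by (simp add: eps0_def)

lemma geom_p_bounds: "0 < geom_p" "geom_p \<le> 1" "1 - geom_p = exp (- eps0)"
  using eps0_pos by (auto simp: geom_p_def)

lemma grid_k_le: "grid_k c \<le> n"
  by (simp add: grid_k_def)

lemma stop_time_le_iff_take:
  assumes "valid_stream n T xs" "valid_stream n T ys" "take t xs = take t ys" "s \<le> t"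
  shows "stop_time i xs w \<le> s \<longleftrightarrow> stop_time i ys w \<le> s"
proof (cases "s \<le> T")
  case True
  have "fires i xs w t' = fires i ys w t'" if "t' \<le> s" for t'
    using freq_take_eq[of xs ys t t'] assms that by (simp add: valid_stream_def fires_def query_def)
  then show ?thesis unfolding stop_time_def first_hit_le_iff[OF True] by auto
qed (use first_hit_range(2)[of T "fires i xs w"] first_hit_range(2)[of T "fires i ys w"]
      in \<open>simp add: stop_time_def\<close>)

lemma continual_mech: "continual n T mech"
  unfolding continual_def
proof (intro allI impI)
  fix xs ys t
  assume "valid_stream n T xs \<and> valid_stream n T ys \<and> take t xs = take t ys"
  then have "{i. stop_times xs w i \<le> s} = {i. stop_times ys w i \<le> s}" if "s \<le> t" for s w
    using stop_time_le_iff_take[of xs ys t s] that by (auto simp: stop_times_def)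
  then have "prefix_output t (release (stop_times xs w)) = prefix_output t (release (stop_times ys w))"
    for w
    by (auto simp: prefix_output_def release_def)
  then show "map_pmf (prefix_output t) (mech xs) = map_pmf (prefix_output t) (mech ys)"
    by (simp add: mech_def pmf.map_comp o_def)
qed

text \<open>Maps a run on xs to a run on a neighbour with the same stopping times.\<close>
definition shift_amount :: "(nat \<times> nat \<Rightarrow> nat) \<Rightarrow> (nat \<times> nat) \<times> nat \<Rightarrow> nat" where
  "shift_amount \<sigma> x =
   (if fst x \<in> Grid then (if snd x = 0 then 1 else if snd x = \<sigma> (fst x) \<and> snd x \<le> T then 2 else 0)
    else (0::nat))"

definition noise_shift :: "(nat \<times> nat \<Rightarrow> nat) \<Rightarrow> noise_vec \<Rightarrow> noise_vec" where
  "noise_shift \<sigma> w = (\<lambda>x. w x + shift_amount \<sigma> x)"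

lemma sum_shift_amount_le: "sum (shift_amount \<sigma>) Noise_Idx \<le> 3 * card Grid"
proof -
  have "(\<Sum>t\<le>T. shift_amount \<sigma> (i, t)) \<le> 3" if "i \<in> Grid" for i
  proof -
    have "(\<Sum>t\<le>T. shift_amount \<sigma> (i, t)) \<le> (\<Sum>t\<le>T. (if t = 0 then 1 else 0) + (if t = \<sigma> i then 2 else 0))"
      using that by (intro sum_mono) (auto simp: shift_amount_def)
    also have "\<dots> \<le> 3" by (simp add: sum.distrib)
    finally show ?thesis .
  qed
  then have "(\<Sum>i\<in>Grid. \<Sum>t\<le>T. shift_amount \<sigma> (i, t)) \<le> (\<Sum>i\<in>Grid. 3)" by (rule sum_mono)
  then show ?thesis by (simp add: Noise_Idx_def sum.cartesian_product)
qed

lemma pmf_noise_le_shift: "pmf noise w \<le> exp eps * pmf noise (noise_shift \<sigma> w)"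
proof -
  define m where "m = sum (shift_amount \<sigma>) Noise_Idx"
  have "\<And>x. x \<notin> Noise_Idx \<Longrightarrow> shift_amount \<sigma> x = 0"
    by (auto simp: shift_amount_def Noise_Idx_def)
  then have "pmf noise (noise_shift \<sigma> w) = (1 - geom_p) ^ m * pmf noise w"
    unfolding noise_def noise_shift_def m_def
    by (rule pmf_Pi_geometric_shift[OF finite_Noise_Idx geom_p_bounds(1,2)])
  also have "(1 - geom_p) ^ m = exp (- (eps0 * real m))"
    by (simp add: geom_p_bounds(3) exp_of_nat_mult[symmetric])
  finally have "pmf noise w = exp (eps0 * real m) * pmf noise (noise_shift \<sigma> w)"
    by (simp add: exp_minus field_simps)
  also have "eps0 * real m \<le> eps"
    using mult_left_mono[OF of_nat_mono[OF sum_shift_amount_le[of \<sigma>]] less_imp_le[OF eps0_pos]]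
      card_Grid_pos by (simp add: eps0_def m_def)
  then have "exp (eps0 * real m) * pmf noise (noise_shift \<sigma> w) \<le> exp eps * pmf noise (noise_shift \<sigma> w)"
    by (intro mult_right_mono) auto
  finally show ?thesis .
qed

lemma inj_noise_shift: "inj (noise_shift \<sigma>)"
  by (rule injI) (simp add: noise_shift_def fun_eq_iff)

lemma query_neighboring:
  assumes "neighboring xs ys"
  shows "query c ys t \<le> query c xs t + 1" "query c xs t \<le> query c ys t + 1"
  using topk_freq_neighboring[OF neighboring_sym[OF assms] grid_k_le]
    topk_freq_neighboring[OF assms grid_k_le] by (auto simp: query_def)

lemma stop_time_noise_shift:
  assumes nb: "neighboring xs ys" and i: "i \<in> Grid" and stop: "stop_time i xs w = \<sigma> i"
  shows "stop_time i ys (noise_shift \<sigma> w) = \<sigma> i"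
proof -
  let ?P = "fires i xs w"
  have \<sigma>: "\<sigma> i = first_hit T ?P" using stop by (simp add: stop_time_def)
  have w0: "noise_shift \<sigma> w (i, 0) = w (i, 0) + 1"
    using i by (simp add: noise_shift_def shift_amount_def)
  show ?thesis
    unfolding \<sigma> stop_time_def
  proof (rule first_hit_eqI)
    fix t assume t: "1 \<le> t" "t < first_hit T ?P"
    then have "noise_shift \<sigma> w (i, t) = w (i, t)"
      using i \<sigma> by (simp add: noise_shift_def shift_amount_def)
    then show "\<not> fires i ys (noise_shift \<sigma> w) t"
      using first_hit_before[OF t] query_neighboring(1)[OF nb, of "fst i" t] w0
      by (simp add: fires_def)
  next
    assume hit: "first_hit T ?P \<le> T"
    then have "noise_shift \<sigma> w (i, first_hit T ?P) = w (i, first_hit T ?P) + 2"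
      using i \<sigma> first_hit_range(1)[of T ?P] by (simp add: noise_shift_def shift_amount_def)
    then show "fires i ys (noise_shift \<sigma> w) (first_hit T ?P)"
      using first_hit_hit[OF hit] query_neighboring(2)[OF nb, of "fst i" "first_hit T ?P"] w0
      by (simp add: fires_def)
  qed
qed

lemma prob_stop_times_neighboring:
  assumes "neighboring xs ys"
  shows "measure_pmf.prob noise {w. stop_times xs w = \<sigma>}
    \<le> exp eps * measure_pmf.prob noise {w. stop_times ys w = \<sigma>}"
proof -
  have "measure_pmf.prob noise {w. stop_times xs w = \<sigma>}
      \<le> exp eps * measure_pmf.prob noise (noise_shift \<sigma> ` {w. stop_times xs w = \<sigma>})"
    by (rule measure_pmf_le_image_if_pmf_le[OF inj_noise_shift _ pmf_noise_le_shift]) simp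
  also have "noise_shift \<sigma> ` {w. stop_times xs w = \<sigma>} \<subseteq> {w. stop_times ys w = \<sigma>}"
    using stop_time_noise_shift[OF assms] by (auto simp: stop_times_def fun_eq_iff split: if_splits)
  then have "measure_pmf.prob noise (noise_shift \<sigma> ` {w. stop_times xs w = \<sigma>})
      \<le> measure_pmf.prob noise {w. stop_times ys w = \<sigma>}"
    by (rule measure_pmf.finite_measure_mono) simp
  finally show ?thesis by simp
qed

lemma dp_mech: "event_level_dp n T eps mech"
  unfolding event_level_dp_def
proof (intro allI impI)
  fix xs ys :: "nat option list" and S
  assume "valid_stream n T xs \<and> valid_stream n T ys \<and> neighboring xs ys"
  then have "pmf (map_pmf (stop_times xs) noise) \<sigma> \<le> exp eps * pmf (map_pmf (stop_times ys) noise) \<sigma>" for \<sigma>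
    using prob_stop_times_neighboring[of xs ys \<sigma>] by (simp add: pmf_map vimage_def)
  then have "measure_pmf.prob (map_pmf (stop_times xs) noise) (release -` S)
      \<le> exp eps * measure_pmf.prob (map_pmf (stop_times ys) noise) (release -` S)"
    by (intro measure_pmf_le_if_pmf_le) auto
  then show "measure_pmf.prob (mech xs) S \<le> exp eps * measure_pmf.prob (mech ys) S"
    by (simp add: mech_def measure_map_pmf vimage_comp)
qed

lemma logNT_ge_1: "1 \<le> logNT"
proof -
  have "3 \<le> real n * real T + 2" using n T mult_mono[of 1 "real n" 1 "real T"] by simp
  then have "ln 3 \<le> logNT" by (simp add: logNT_def)
  moreover have "1 \<le> ln (3::real)" using exp_le by (simp add: ln_ge_iff)
  ultimately show ?thesis by simp
qed

lemma nT_le_pow_gmax: "real n * real T + 2 \<le> (1 + eta) ^ gmax"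
proof -
  have "eta / 2 \<le> eta - eta\<^sup>2" using eta_bounds by (simp add: power2_eq_square)
  also have "\<dots> \<le> ln (1 + eta)" using eta_bounds by (intro ln_one_plus_pos_lower_bound) auto
  finally have ln: "eta / 2 \<le> ln (1 + eta)" .
  have gmax: "8 * logNT / zeta \<le> real gmax" unfolding gmax_def by (rule real_nat_ceiling_ge)
  have "logNT = (8 * logNT / zeta) * (eta / 2)" using zeta by (simp add: eta_def field_simps)
  also have "\<dots> \<le> real gmax * ln (1 + eta)"
    using gmax ln logNT_ge_1 zeta eta_bounds by (intro mult_mono) auto
  finally have "exp logNT \<le> exp (real gmax * ln (1 + eta))" by simp
  also have "\<dots> = (1 + eta) ^ gmax" using eta_bounds by (simp add: exp_of_nat_mult)
  finally show ?thesis by (simp add: logNT_def add_nonneg_pos)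
qed

lemma threshold_covers:
  assumes y: "1 \<le> y" "y \<le> T"
  obtains a where "a \<le> gmax" "real y \<le> threshold a" "threshold a - 1 \<le> (1 + 2 * eta) * (real y - 1)"
proof -
  have "real y \<le> real n * real T + 2" using y n mult_mono[of 1 "real n" "real y" "real T"] by simp
  then obtain a where a: "a \<le> gmax" "real y \<le> (1 + eta) ^ a" "(1 + eta) ^ a \<le> (1 + eta) * real y"
    using exists_power_between[of "1 + eta" "real y" gmax] nT_le_pow_gmax eta_bounds y(1) by auto
  have "int y \<le> \<lfloor>(1 + eta) ^ a\<rfloor>" using a(2) by (simp add: le_floor_iff)
  then have "real y \<le> threshold a" unfolding threshold_def by (metis of_int_le_iff of_int_of_nat_eq)
  moreover have "threshold a - 1 \<le> (1 + 2 * eta) * (real y - 1)"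
  proof (cases "y = 1")
    case True
    then have "threshold a < 2" using a(3) eta_bounds by (simp add: threshold_def)
    then have "threshold a \<le> 1" by (simp add: threshold_def)
    then show ?thesis using True by simp
  next
    case False
    then have "(1 + eta) * real y - 1 \<le> (1 + 2 * eta) * (real y - 1)"
      using y eta_bounds by (simp add: algebra_simps)
    moreover have "threshold a \<le> (1 + eta) ^ a" by (simp add: threshold_def)
    ultimately show ?thesis using a(3) by simp
  qed
  ultimately show thesis using that a(1) by blast
qed

lemma grid_k_covers:
  assumes k: "1 \<le> k" "k \<le> n"
  obtains c where "c \<le> gmax" "k \<le> grid_k c" "real (grid_k c) \<le> (1 + eta) * real k"
proof -
  have "real k \<le> real n * real T + 2" using k T mult_mono[of "real k" "real n" 1 "real T"] by simp
  then obtain c where c: "c \<le> gmax" "real k \<le> (1 + eta) ^ c" "(1 + eta) ^ c \<le> (1 + eta) * real k"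
    using exists_power_between[of "1 + eta" "real k" gmax] nT_le_pow_gmax eta_bounds k(1) by auto
  have "k \<le> grid_k c" using c(2) k(2) by (simp add: grid_k_def le_nat_floor le_floor_iff)
  moreover have "real (grid_k c) \<le> (1 + eta) ^ c"
  proof -
    have "real (grid_k c) \<le> real (nat \<lfloor>(1 + eta) ^ c\<rfloor>)" by (simp add: grid_k_def)
    also have "\<dots> \<le> (1 + eta) ^ c" using eta_bounds by (intro of_nat_floor) simp
    finally show ?thesis .
  qed
  ultimately show thesis using c(3) by (intro that[OF c(1)]) (auto intro: order_trans)
qed

lemma grid_k_gmax: "grid_k gmax = n"
proof -
  have "real n \<le> real n * real T + 2" using T mult_mono[of "real n" "real n" 1 "real T"] by simp
  then have "real n \<le> (1 + eta) ^ gmax" using nT_le_pow_gmax by simp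
  then show ?thesis by (simp add: grid_k_def le_nat_floor le_floor_iff)
qed

lemma query_mono: "t \<le> t' \<Longrightarrow> query c xs t \<le> query c xs t'"
  unfolding query_def by (rule topk_freq_mono[OF grid_k_le])

lemma query_le_T: "valid_stream n T xs \<Longrightarrow> query c xs t \<le> real T"
  using topk_freq_le_length[OF grid_k_le, of c xs t] by (simp add: query_def valid_stream_def)

definition small_noise :: "noise_vec set" where
  "small_noise = {w. \<forall>x\<in>Noise_Idx. w x \<le> noise_bound}"

lemma query_ge_if_stopped:
  assumes w: "w \<in> small_noise" and i: "(c, a) \<in> Grid" and t: "t \<le> T"
    and stop: "stop_time (c, a) xs w \<le> t"
  shows "threshold a - real noise_bound \<le> query c xs t"
proof -
  obtain t' where t': "1 \<le> t'" "t' \<le> t" "fires (c, a) xs w t'"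
    using stop first_hit_le_iff[OF t] by (auto simp: stop_time_def)
  have "w ((c, a), t') \<le> noise_bound" using w i t' t by (auto simp: small_noise_def Noise_Idx_def)
  then show ?thesis using t'(3) query_mono[OF t'(2), of c xs] by (simp add: fires_def)
qed

lemma query_less_if_not_stopped:
  assumes w: "w \<in> small_noise" and i: "(c, a) \<in> Grid" and t: "1 \<le> t" "t \<le> T"
    and stop: "\<not> stop_time (c, a) xs w \<le> t"
  shows "query c xs t < threshold a + real noise_bound"
proof -
  have "\<not> fires (c, a) xs w t" using stop first_hit_le_iff[OF t(2)] t by (auto simp: stop_time_def)
  moreover have "w ((c, a), 0) \<le> noise_bound" using w i by (auto simp: small_noise_def Noise_Idx_def)
  ultimately show ?thesis by (simp add: fires_def)
qed

lemma query_le_query_ub: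
  assumes w: "w \<in> small_noise" and c: "c \<le> gmax" and t: "1 \<le> t" "t \<le> T"
    and xs: "valid_stream n T xs"
  shows "query c xs t \<le> query_ub {i. stop_times xs w i \<le> t} c"
proof -
  have "query c xs t \<in> \<nat>" unfolding query_def by (rule topk_freq_in_Nats[OF grid_k_le])
  then obtain m where m: "query c xs t = real m" by (rule Nats_cases)
  have "query c xs t \<le> threshold a + real noise_bound - 1"
    if a: "a \<le> gmax" "(c, a) \<notin> {i. stop_times xs w i \<le> t}" for a
  proof -
    have ca: "(c, a) \<in> Grid" and ns: "\<not> stop_time (c, a) xs w \<le> t"
      using a c by (auto simp: Grid_def stop_times_def)
    have "query c xs t < threshold a + real noise_bound"
      using ns by (rule query_less_if_not_stopped[OF w ca t])
    then have "real_of_int (int m) < real_of_int (\<lfloor>(1 + eta) ^ a\<rfloor> + int noise_bound)"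
      using m by (simp add: threshold_def)
    then show ?thesis using of_int_less_imp_le_diff_one m by (fastforce simp: threshold_def)
  qed
  then show ?thesis unfolding query_ub_def using query_le_T[OF xs] by (intro Min.boundedI) auto
qed

lemma query_ub_le:
  assumes w: "w \<in> small_noise" and c: "c \<le> gmax" and t: "1 \<le> t" "t \<le> T"
  shows "query_ub {i. stop_times xs w i \<le> t} c
    \<le> (1 + 2 * eta) * (query c xs t + real noise_bound) + real noise_bound"
proof -
  let ?S = "{i. stop_times xs w i \<le> t}"
  let ?X = "(\<lambda>a. threshold a + real noise_bound - 1) ` {a. a \<le> gmax \<and> (c, a) \<notin> ?S}"
  have fin: "finite (insert (real T) ?X)" by simp
  have "query c xs t \<in> \<nat>" unfolding query_def by (rule topk_freq_in_Nats[OF grid_k_le])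
  then obtain m where m: "query c xs t = real m" by (rule Nats_cases)
  show ?thesis
  proof (cases "T \<le> m + noise_bound")
    case True
    have "query_ub ?S c \<le> real T" unfolding query_ub_def using fin by (intro Min_le) auto
    moreover have "0 \<le> 2 * eta * (real m + real noise_bound)" using eta_bounds by simp
    moreover have "(1 + 2 * eta) * (real m + real noise_bound)
        = real m + real noise_bound + 2 * eta * (real m + real noise_bound)"
      by (simp add: algebra_simps)
    ultimately show ?thesis using True m by simp
  next
    case False
    then obtain a where a: "a \<le> gmax" "real (m + noise_bound + 1) \<le> threshold a"
        "threshold a - 1 \<le> (1 + 2 * eta) * (real (m + noise_bound + 1) - 1)"
      using threshold_covers[of "m + noise_bound + 1"] by auto
    have "(c, a) \<in> Grid" using a(1) c by (simp add: Grid_def)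
    then have "(c, a) \<notin> ?S"
      using query_ge_if_stopped[OF w _ t(2)] a(2) m by (force simp: stop_times_def)
    then have "query_ub ?S c \<le> threshold a + real noise_bound - 1"
      unfolding query_ub_def using fin a(1) by (intro Min_le) auto
    then show ?thesis using a(3) m by simp
  qed
qed

lemma topk_le_topk_ub:
  assumes w: "w \<in> small_noise" and t: "1 \<le> t" "t \<le> T" and xs: "valid_stream n T xs"
    and k: "1 \<le> k" "k \<le> n"
  shows "topk n k (freq xs t) \<le> topk_ub {i. stop_times xs w i \<le> t} k"
  unfolding topk_ub_def
proof (intro Min.boundedI; clarsimp?)
  fix c assume c: "c \<le> gmax" "k \<le> grid_k c"
  have "topk n k (freq xs t) \<le> query c xs t"
    unfolding query_def by (rule topk_mono_k[OF c(2) grid_k_le]) (simp add: freq_nonneg)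
  also have "\<dots> \<le> query_ub {i. stop_times xs w i \<le> t} c" by (rule query_le_query_ub[OF w c(1) t xs])
  finally show "topk n k (freq xs t) \<le> query_ub {i. stop_times xs w i \<le> t} c" .
qed (use grid_k_gmax k in auto)

lemma topk_ub_le:
  assumes w: "w \<in> small_noise" and t: "1 \<le> t" "t \<le> T" and k: "1 \<le> k" "k \<le> n"
  shows "topk_ub {i. stop_times xs w i \<le> t} k \<le> (1 + zeta) * topk n k (freq xs t) + 3 * real noise_bound"
proof -
  let ?f = "freq xs t" and ?E = "real noise_bound"
  obtain c where c: "c \<le> gmax" "k \<le> grid_k c" "real (grid_k c) \<le> (1 + eta) * real k"
    using grid_k_covers[OF k] .
  have topk: "0 \<le> topk n k ?f" using k(2) freq_nonneg by (intro topk_nonneg) auto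
  have "query c xs t \<le> real (grid_k c) / real k * topk n k ?f"
    unfolding query_def by (rule topk_le_ratio[OF k(1) c(2) grid_k_le])
  also have "\<dots> \<le> (1 + eta) * topk n k ?f"
    using c(3) k(1) topk by (intro mult_right_mono) (simp_all add: divide_le_eq mult.commute)
  finally have query: "query c xs t \<le> (1 + eta) * topk n k ?f" .
  have "topk_ub {i. stop_times xs w i \<le> t} k \<le> query_ub {i. stop_times xs w i \<le> t} c"
    unfolding topk_ub_def using c by (intro Min_le) auto
  also have "\<dots> \<le> (1 + 2 * eta) * (query c xs t + ?E) + ?E" by (rule query_ub_le[OF w c(1) t])
  also have "\<dots> \<le> (1 + 2 * eta) * ((1 + eta) * topk n k ?f + ?E) + ?E"
    using query eta_bounds by (intro add_right_mono mult_left_mono) auto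
  also have "\<dots> = ((1 + 2 * eta) * (1 + eta)) * topk n k ?f + ((1 + 2 * eta) * ?E + ?E)"
    by (simp add: algebra_simps)
  also have "\<dots> \<le> (1 + zeta) * topk n k ?f + 3 * ?E"
  proof (intro add_mono mult_right_mono topk)
    have "eta * eta \<le> eta * (1/8)" using eta_bounds by (intro mult_left_mono) auto
    moreover have "(1 + 2 * eta) * (1 + eta) = 1 + 3 * eta + 2 * (eta * eta)"
      by (simp add: algebra_simps)
    ultimately have "(1 + 2 * eta) * (1 + eta) \<le> 1 + 4 * eta" using eta_bounds(1) by linarith
    then show "(1 + 2 * eta) * (1 + eta) \<le> 1 + zeta" by (simp add: eta_def)
    show "(1 + 2 * eta) * ?E + ?E \<le> 3 * ?E"
      using eta_bounds mult_right_mono[of "2 * eta" 1 ?E] by (simp add: algebra_simps)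
  qed
  finally show ?thesis .
qed

lemma accurate_if_small_noise:
  assumes w: "w \<in> small_noise" and xs: "valid_stream n T xs" and \<alpha>: "3 * real noise_bound \<le> \<alpha>"
  shows "accurate_output n T zeta \<alpha> xs (release (stop_times xs w))"
  unfolding accurate_output_def
proof (intro ballI allI impI)
  fix t L assume t: "t \<in> {1..T}" and L: "mon_sym_norm n L"
  let ?f = "freq xs t" and ?U = "topk_ub {i. stop_times xs w i \<le> t}"
  have norm: "is_norm_on n L" using L by (simp add: mon_sym_norm_def)
  have f: "?f \<in> rvec n" "\<forall>i<n. 0 \<le> ?f i" by (simp_all add: freq_rvec[OF xs] freq_nonneg)
  have U: "topk n k ?f \<le> ?U k \<and> ?U k \<le> (1 + zeta) * topk n k ?f + 3 * real noise_bound"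
    if "1 \<le> k" "k \<le> n" for k
    using topk_le_topk_ub[OF w _ _ xs that] topk_ub_le[OF w _ _ that] t by auto
  note env = Sup_norm_topk_envelope[OF L n f _ _ U]
  have Lf: "0 \<le> L ?f" and Le1: "0 \<le> L e1"
    using norm_on_nonneg[OF norm] f(1) n by (auto simp: rvec_def e1_def)
  have "L ?f * 1 \<le> L ?f * (1 + zeta)" using Lf zeta by (intro mult_left_mono) auto
  then have "L ?f / (1 + zeta) \<le> L ?f" using zeta by (simp add: divide_le_eq)
  moreover have "3 * real noise_bound * L e1 \<le> \<alpha> * L e1" using \<alpha> Le1 by (rule mult_right_mono)
  moreover have "0 \<le> \<alpha> * L e1" using \<alpha> Le1 by simp
  ultimately show "L ?f / (1 + zeta) - \<alpha> * L e1 \<le> release (stop_times xs w) t L \<and>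
      release (stop_times xs w) t L \<le> (1 + zeta) * L ?f + \<alpha> * L e1"
    using env zeta by (simp add: release_def)
qed

lemma prob_small_noise: "2/3 \<le> measure_pmf.prob noise small_noise"
proof -
  let ?N = "real (card Noise_Idx)"
  have N: "1 \<le> card Noise_Idx" using card_Grid_pos by (simp add: card_Noise_Idx)
  have tail: "measure_pmf.prob noise {w. Suc noise_bound \<le> w x} = exp (- eps0) ^ Suc noise_bound"
    if "x \<in> Noise_Idx" for x
  proof -
    have "map_pmf (\<lambda>w. w x) noise = geometric_pmf geom_p"
      using that Pi_pmf_component[OF finite_Noise_Idx, of x 0 "\<lambda>_. geometric_pmf geom_p"]
      by (simp add: noise_def)
    then show ?thesis
      using geometric_pmf_tail[OF geom_p_bounds(1,2)] geom_p_bounds(3) measure_map_pmf[of "\<lambda>w. w x" noise]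
      by (simp add: vimage_def)
  qed
  text \<open>noise_bound is chosen so that each coordinate exceeds it with probability below 1/(3N).\<close>
  have "ln (3 * ?N) / eps0 \<le> real (Suc noise_bound)"
    using N eps0_pos by (simp add: noise_bound_def) linarith
  then have "ln (3 * ?N) \<le> real (Suc noise_bound) * eps0" using eps0_pos by (simp add: divide_le_eq)
  then have "exp (- (real (Suc noise_bound) * eps0)) \<le> exp (- ln (3 * ?N))" by simp
  then have "exp (- eps0) ^ Suc noise_bound \<le> exp (- ln (3 * ?N))"
    by (metis exp_of_nat_mult mult_minus_right)
  also have "\<dots> = 1 / (3 * ?N)" using N by (simp add: exp_minus inverse_eq_divide)
  finally have each: "exp (- eps0) ^ Suc noise_bound \<le> 1 / (3 * ?N)" .
  have "measure_pmf.prob noise (UNIV - small_noise)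
      \<le> (\<Sum>x\<in>Noise_Idx. measure_pmf.prob noise {w. Suc noise_bound \<le> w x})"
    unfolding small_noise_def
    by (rule order_trans[OF _ measure_pmf.finite_measure_subadditive_finite[OF finite_Noise_Idx]])
      (auto intro!: measure_pmf.finite_measure_mono simp: not_le Suc_le_eq)
  also have "\<dots> \<le> (\<Sum>x\<in>Noise_Idx. 1 / (3 * ?N))" using tail each by (intro sum_mono) auto
  also have "\<dots> = 1/3" using N by simp
  finally show ?thesis using measure_pmf.prob_compl[of small_noise noise] by simp
qed

lemma prob_accurate:
  assumes xs: "valid_stream n T xs" and \<alpha>: "3 * real noise_bound \<le> \<alpha>"
  shows "2/3 \<le> measure_pmf.prob (mech xs) {out. accurate_output n T zeta \<alpha> xs out}"
proof -
  have "measure_pmf.prob noise small_noise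
      \<le> measure_pmf.prob noise {w. accurate_output n T zeta \<alpha> xs (release (stop_times xs w))}"
    using accurate_if_small_noise[OF _ xs \<alpha>] by (intro measure_pmf.finite_measure_mono) auto
  then show ?thesis using prob_small_noise by (simp add: mech_def measure_map_pmf vimage_def)
qed

definition log_factor :: real where
  "log_factor = ln (logNT + 2) + ln (1 / eps + 2) + ln (1 / zeta + 2)"

lemma log_factor_ge_1: "1 \<le> log_factor"
proof -
  have "1 \<le> ln (3::real)" using exp_le by (simp add: ln_ge_iff)
  also have "\<dots> \<le> ln (logNT + 2)" using logNT_ge_1 by simp
  moreover have "0 \<le> ln (1 / eps + 2)" "0 \<le> ln (1 / zeta + 2)" using eps zeta by simp_all
  ultimately show ?thesis by (simp add: log_factor_def)
qed

lemma gmax_bound: "real gmax + 1 \<le> 10 * logNT / zeta"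
proof -
  have "real gmax < 8 * logNT / zeta + 1"
    using logNT_ge_1 zeta by (simp add: gmax_def) linarith
  moreover have "1 \<le> logNT / zeta" using logNT_ge_1 zeta by (simp add: le_divide_eq)
  moreover have "10 * logNT / zeta = 8 * logNT / zeta + 2 * (logNT / zeta)" by (simp add: field_simps)
  ultimately show ?thesis by linarith
qed

lemma card_Grid_bound: "real (card Grid) \<le> 100 * logNT ^ 2 / zeta ^ 2"
proof -
  have "real (card Grid) = (real gmax + 1) ^ 2" by (simp add: card_Grid power2_eq_square algebra_simps)
  also have "\<dots> \<le> (10 * logNT / zeta) ^ 2" by (rule power_mono[OF gmax_bound]) simp
  finally show ?thesis by (simp add: power_divide power_mult_distrib)
qed

lemma ln_card_Noise_Idx_bound: "ln (3 * real (card Noise_Idx)) \<le> 106 * logNT * log_factor"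
proof -
  have G: "0 < real (card Grid)" using card_Grid_pos by simp
  have log_factor: "ln logNT \<le> log_factor" "ln (1 / zeta) \<le> log_factor"
  proof -
    have "0 \<le> ln (logNT + 2)" "0 \<le> ln (1 / eps + 2)" "0 \<le> ln (1 / zeta + 2)"
      using logNT_ge_1 eps zeta by simp_all
    moreover have "ln logNT \<le> ln (logNT + 2)" using logNT_ge_1 by simp
    moreover have "ln (1 / zeta) \<le> ln (1 / zeta + 2)"
      using zeta by (subst ln_le_cancel_iff) (auto simp: add_pos_pos)
    ultimately show "ln logNT \<le> log_factor" "ln (1 / zeta) \<le> log_factor"
      unfolding log_factor_def by linarith+
  qed
  have "3 * real (card Noise_Idx) = 3 * real (card Grid) * (real T + 1)"
    by (simp add: card_Noise_Idx algebra_simps)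
  also have "ln \<dots> = ln (3 * real (card Grid)) + ln (real T + 1)" using G by (intro ln_mult_pos) auto
  also have "ln (3 * real (card Grid)) = ln 3 + ln (real (card Grid))" using G by (intro ln_mult_pos) auto
  also have "ln (real (card Grid)) \<le> ln (100 * logNT ^ 2 / zeta ^ 2)"
    using card_Grid_bound G by simp
  also have "\<dots> = ln 100 + 2 * ln logNT + 2 * ln (1 / zeta)"
    using logNT_ge_1 zeta by (simp add: ln_mult ln_div ln_realpow)
  also have "ln (real T + 1) \<le> logNT"
    using n mult_mono[of 1 "real n" "real T" "real T"] by (simp add: logNT_def)
  also have "ln 3 \<le> (2::real)" using ln_le_minus_one[of 3] by simp
  also have "ln 100 \<le> (99::real)" using ln_le_minus_one[of 100] by simp
  also have "2 + (99 + 2 * ln logNT + 2 * ln (1 / zeta)) + logNT \<le> 101 + 4 * log_factor + logNT"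
    using log_factor by linarith
  also have "\<dots> \<le> 106 * logNT * log_factor"
    using mult_mono[OF logNT_ge_1 log_factor_ge_1] logNT_ge_1 log_factor_ge_1
      mult_left_mono[OF log_factor_ge_1, of logNT] mult_right_mono[OF logNT_ge_1, of log_factor]
    by linarith
  finally show ?thesis by simp
qed

lemma noise_bound_le: "real noise_bound \<le> 31800 * logNT ^ 3 * log_factor / (zeta ^ 2 * eps)"
proof -
  have "1 \<le> card Noise_Idx" using card_Grid_pos by (simp add: card_Noise_Idx)
  then have "0 \<le> ln (3 * real (card Noise_Idx)) / eps0" using eps0_pos by simp
  then have "real noise_bound \<le> ln (3 * real (card Noise_Idx)) / eps0"
    unfolding noise_bound_def by (rule of_nat_floor)
  also have "\<dots> = ln (3 * real (card Noise_Idx)) * (3 * real (card Grid)) / eps"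
    using eps card_Grid_pos by (simp add: eps0_def)
  also have "\<dots> \<le> (106 * logNT * log_factor) * (3 * (100 * logNT ^ 2 / zeta ^ 2)) / eps"
    using ln_card_Noise_Idx_bound card_Grid_bound logNT_ge_1 log_factor_ge_1 eps
    by (intro divide_right_mono mult_mono) auto
  also have "\<dots> = 31800 * logNT ^ 3 * log_factor / (zeta ^ 2 * eps)"
    by (simp add: field_simps power2_eq_square power3_eq_cube)
  finally show ?thesis .
qed

text \<open>Squaring the bound absorbs the case eps > 1, where 1/eps alone does not dominate 1/eps^2.\<close>
lemma three_noise_bound_le:
  "3 * real noise_bound \<le> 3033720000 * logNT ^ 6 / (eps ^ 2 * zeta ^ 5) * log_factor ^ 2"
proof -
  define Y where "Y = 31800 * logNT ^ 3 * log_factor / (zeta ^ 2 * eps)"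
  have "real noise_bound \<le> real (noise_bound * noise_bound)" by (simp only: of_nat_le_iff le_square)
  also have "\<dots> = real noise_bound ^ 2" by (simp add: power2_eq_square)
  also have "\<dots> \<le> Y ^ 2" unfolding Y_def by (rule power_mono[OF noise_bound_le]) simp
  also have "\<dots> = 31800 ^ 2 * logNT ^ 6 * log_factor ^ 2 / (zeta ^ 4 * eps ^ 2)"
    by (simp add: Y_def power_divide power_mult_distrib power_mult[symmetric])
  also have "\<dots> \<le> 31800 ^ 2 * logNT ^ 6 * log_factor ^ 2 / (zeta ^ 5 * eps ^ 2)"
    using zeta eps power_decreasing[of 4 5 zeta]
    by (intro divide_left_mono mult_right_mono) auto
  also have "\<dots> = 3033720000 * logNT ^ 6 / (eps ^ 2 * zeta ^ 5) * log_factor ^ 2 / 3"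
    by (simp add: field_simps)
  finally show ?thesis by simp
qed

end

theorem mainTheorem17:
  "\<exists>C k::nat. C > 0 \<and>
    (\<forall>(n::nat) (T::nat) (\<epsilon>::real) (\<zeta>::real).
       n \<ge> 1 \<and> T \<ge> 1 \<and> \<epsilon> > 0 \<and> 0 < \<zeta> \<and> \<zeta> \<le> 1/2 \<longrightarrow>
       (\<exists>M::mechanism.
          continual n T M \<and> event_level_dp n T \<epsilon> M \<and>
          (let \<alpha> = C * ln (real n * real T + 2) ^ 6 / (\<epsilon>^2 * \<zeta>^5)
                     * (ln (ln (real n * real T + 2) + 2) + ln (1/\<epsilon> + 2) + ln (1/\<zeta> + 2)) ^ k
           in \<forall>xs. valid_stream n T xs \<longrightarrow>
                measure_pmf.prob (M xs) {out. accurate_output n T \<zeta> \<alpha> xs out} \<ge> 2/3)))"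
proof (rule exI[of _ 3033720000], rule exI[of _ 2], intro conjI allI impI, goal_cases)
  case (2 n T \<epsilon> \<zeta>)
  then interpret grid_mechanism n T \<epsilon> \<zeta> by unfold_locales auto
  show ?case
    unfolding Let_def
    using continual_mech dp_mech prob_accurate[OF _ three_noise_bound_le]
    by (intro exI[of _ mech]) (simp add: logNT_def log_factor_def)
qed simp

end
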